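(* Let $\gamma>0$ and $\delta\ge 0$ be given, and let $(S,L,H)$ be an open quantum system with $H=H_P+H_{un}$, where $H_{un}\in\mathcal W_1$. Let $w,z$ be real (i.e. componentwise self-adjoint) vectors of operators witnessing $H_{un}\in\mathcal W_1$: - for every $V\in\mathcal P$ they satisfy $[V,H_{un}]=[V,z^T]w-w^T[z,V]$; - they satisfy the sector bound $w^Tw\le \frac{1}{\gamma^2}z^Tz+\delta$. Let $W$ be a non-negative self-adjoint operator. Suppose there exist $V\in\mathcal P$ and a real constant $\lambda\ge 0$ such that $$-i[V,H_P]+\mathcal L(V)+[V,z^T][z,V]+\frac{1}{\gamma^2}z^Tz+W\le \lambda .$$ Then, for any initial state, $$\limsup_{T\to\infty}\frac1T\int_0^T\langle W(t)\rangle\,dt\le \lambda+\delta .$$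
   Context: **Canonical operators.** Let $n\ge1$. Let $q=(q_1,\dots,q_n)^T$ and $p=(p_1,\dots,p_n)^T$ be vectors of self-adjoint (position and momentum) operators on a Hilbert space, and write $x=(q^T,p^T)^T$. They satisfy the canonical commutation relations $[x,x^T]:=xx^T-(xx^T)^T=2i\theta=:\Sigma$, i.e. $[x_j,x_k]=2i\theta_{jk}$, where $\theta=\begin{pmatrix}0&I_n\\-I_n&0\end{pmatrix}$. **Commutator conventions.** $[A,B]=AB-BA$. For an operator $V$ and a column vector of operators $z$: - $[V,z^T]$ is the row vector with entries $[V,z_k]$; - $[z,V]$ is the column vector with entries $[z_k,V]$. For a vector of operators $L$, $L^\#$ denotes the componentwise adjoint and $L^\dagger=(L^\#)^T$. Operator inequalities $A\le B$ mean $B-A$ is positive semidefinite, and real constants are identified with multiples of the identity. **Open quantum system.** An open quantum system is specified by $(S,L,H)$, where $S$ is a scattering matrix, $L$ is a vector of coupling operators and $H$ is a self-adjoint Hamiltonian. Its generator is $$\mathcal G(\mathbf X)=-i[\mathbf X,H]+\mathcal L(\mathbf X),\qquad \mathcal L(\mathbf X)=\tfrac12L^\dagger[\mathbf X,L]+\tfrac12[L^\dagger,\mathbf X]L.$$ $W(t)$ denotes the Heisenberg evolution of an operator $W$ under this system, and $\langle\cdot\rangle$ denotes quantum expectation. **Known fact (may be used).** If $V,W$ are non-negative self-adjoint operators and $\lambda\in\mathbb R$ satisfy $\mathcal G(V)+W\le\lambda$, then for any initial state $\limsup_{T\to\infty}\frac1T\int_0^T\langle W(t)\rangle dt\le\lambda$.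 **The set $\mathcal P$.** $\mathcal P$ is the set of operators $V=x^TXx$ with $X\in\mathbb R^{2n\times 2n}$ symmetric positive definite. **The set $\mathcal W_1$.** Given $\gamma>0$ and $\delta\ge0$, $\mathcal W_1$ is the set of self-adjoint operators $H_{un}$ for which there exist real vectors of operators $w,z$ such that: - $[V,H_{un}]=[V,z^T]w-w^T[z,V]$ holds for all $V\in\mathcal P$; - $w^Tw\le \frac1{\gamma^2}z^Tz+\delta$. *)

theory Defs
  imports "HOL-Analysis.Analysis" "HOL-Library.Liminf_Limsup"
begin

text \<open>Operators are elements of a
  real algebra with unit ('a :: real_algebra_1), equipped with an adjoint
  operation adj, an imaginary unit ii (central, ii*ii = -1, adj ii = -ii) and a
  positivity predicate pos (positive semidefinite).  Real constants are
  identified with multiples of the identity via of_real.\<close>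

locale op_star_algebra =
  fixes adj :: "'a::real_algebra_1 \<Rightarrow> 'a"
    and ii :: 'a
    and pos :: "'a \<Rightarrow> bool"
  assumes adj_add: "\<And>x y. adj (x + y) = adj x + adj y"
    and adj_mult: "\<And>x y. adj (x * y) = adj y * adj x"
    and adj_scaleR: "\<And>r x. adj (r *\<^sub>R x) = r *\<^sub>R adj x"
    and adj_adj: "\<And>x. adj (adj x) = x"
    and adj_one: "adj 1 = 1"
    and ii_sq: "ii * ii = - 1"
    and ii_central: "\<And>x. ii * x = x * ii"
    and adj_ii: "adj ii = - ii"
    and pos_adj_mult: "\<And>x. pos (adj x * x)"
    and pos_add: "\<And>x y. pos x \<Longrightarrow> pos y \<Longrightarrow> pos (x + y)"
    and pos_scaleR: "\<And>r x. pos x \<Longrightarrow> 0 \<le> r \<Longrightarrow> pos (r *\<^sub>R x)"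
    and pos_selfadj: "\<And>x. pos x \<Longrightarrow> adj x = x"

definition op_le :: "('a::real_algebra_1 \<Rightarrow> bool) \<Rightarrow> 'a \<Rightarrow> 'a \<Rightarrow> bool" where
  "op_le pos A B \<longleftrightarrow> pos (B - A)"

definition comm :: "'a::ring \<Rightarrow> 'a \<Rightarrow> 'a" where
  "comm A B = A * B - B * A"

text \<open>theta = [[0, I_n], [-I_n, 0]], indices 0..2n-1.\<close>
definition theta :: "nat \<Rightarrow> nat \<Rightarrow> nat \<Rightarrow> real" where
  "theta n j k = (if j < n \<and> k = j + n then 1
                  else if n \<le> j \<and> j < 2 * n \<and> k + n = j then -1 else 0)"

text \<open>Canonical operators x = (q_1..q_n, p_1..p_n), self-adjoint, satisfying
  [x_j, x_k] = 2 i theta_jk.\<close>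
definition canonical :: "('a::real_algebra_1 \<Rightarrow> 'a) \<Rightarrow> 'a \<Rightarrow> nat \<Rightarrow> (nat \<Rightarrow> 'a) \<Rightarrow> bool" where
  "canonical adj ii n x \<longleftrightarrow> 1 \<le> n \<and> (\<forall>j < 2 * n. adj (x j) = x j) \<and>
     (\<forall>j < 2 * n. \<forall>k < 2 * n. comm (x j) (x k) = (2 * theta n j k) *\<^sub>R ii)"

definition sym_posdef :: "nat \<Rightarrow> (nat \<Rightarrow> nat \<Rightarrow> real) \<Rightarrow> bool" where
  "sym_posdef N X \<longleftrightarrow> (\<forall>j < N. \<forall>k < N. X j k = X k j) \<and>
     (\<forall>v. (\<exists>j < N. v j \<noteq> 0) \<longrightarrow> (\<Sum>j<N. \<Sum>k<N. v j * X j k * v k) > 0)"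

definition calP :: "nat \<Rightarrow> (nat \<Rightarrow> 'a::real_algebra_1) \<Rightarrow> 'a set" where
  "calP n x = {V. \<exists>X. sym_posdef (2 * n) X \<and>
      V = (\<Sum>j<2 * n. \<Sum>k<2 * n. X j k *\<^sub>R (x j * x k))}"

text \<open>Vectors of operators of length m are functions nat => 'a on {..<m}.\<close>
definition real_vec :: "('a \<Rightarrow> 'a) \<Rightarrow> nat \<Rightarrow> (nat \<Rightarrow> 'a) \<Rightarrow> bool" where
  "real_vec adj m w \<longleftrightarrow> (\<forall>k<m. adj (w k) = w k)"

definition Wterm :: "nat \<Rightarrow> (nat \<Rightarrow> 'a::ring) \<Rightarrow> (nat \<Rightarrow> 'a) \<Rightarrow> 'a \<Rightarrow> 'a" where
  "Wterm m w z V = (\<Sum>k<m. comm V (z k) * w k) - (\<Sum>k<m. w k * comm (z k) V)"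

definition vsq :: "nat \<Rightarrow> (nat \<Rightarrow> 'a::ring) \<Rightarrow> 'a" where
  "vsq m u = (\<Sum>k<m. u k * u k)"

definition calW1 :: "('a::real_algebra_1 \<Rightarrow> 'a) \<Rightarrow> ('a \<Rightarrow> bool) \<Rightarrow> nat \<Rightarrow> (nat \<Rightarrow> 'a)
    \<Rightarrow> real \<Rightarrow> real \<Rightarrow> 'a set" where
  "calW1 adj pos n x gamma delta = {Hun. adj Hun = Hun \<and>
     (\<exists>m w z. real_vec adj m w \<and> real_vec adj m z \<and>
        (\<forall>V \<in> calP n x. comm V Hun = Wterm m w z V) \<and>
        op_le pos (vsq m w) ((1 / gamma\<^sup>2) *\<^sub>R vsq m z + of_real delta))}"

definition lindblad :: "('a::real_algebra_1 \<Rightarrow> 'a) \<Rightarrow> nat \<Rightarrow> (nat \<Rightarrow> 'a) \<Rightarrow> 'a \<Rightarrow> 'a" where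
  "lindblad adj nL L X =
     (1/2) *\<^sub>R (\<Sum>k<nL. adj (L k) * comm X (L k))
   + (1/2) *\<^sub>R (\<Sum>k<nL. comm (adj (L k)) X * L k)"

definition generator :: "('a::real_algebra_1 \<Rightarrow> 'a) \<Rightarrow> 'a \<Rightarrow> nat \<Rightarrow> (nat \<Rightarrow> 'a) \<Rightarrow> 'a \<Rightarrow> 'a \<Rightarrow> 'a" where
  "generator adj ii nL L H X = - (ii * comm X H) + lindblad adj nL L X"

text \<open>Time average (1/T) \<integral>_0^T <W(t)> dt for state rho, where evol W t is the
  Heisenberg evolution W(t) and expect rho is the quantum expectation.\<close>
definition time_avg :: "('s \<Rightarrow> 'a \<Rightarrow> real) \<Rightarrow> ('a \<Rightarrow> real \<Rightarrow> 'a) \<Rightarrow> 's \<Rightarrow> 'a \<Rightarrow> real \<Rightarrow> real" where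
  "time_avg expect evol rho W T = (1 / T) * integral {0..T} (\<lambda>t. expect rho (evol W t))"

end

theory Submission imports Defs begin

text \<open>With \<open>c = [V,z\<^sup>T]\<close> skew-adjoint, completing the square gives
  \<open>-i(c w + w c) = -c c + w w - (i c + w)\<^sup>2 \<le> [V,z\<^sup>T][z,V] + w\<^sup>T w\<close>, and the sector bound
  replaces \<open>w\<^sup>T w\<close> by \<open>z\<^sup>T z/\<gamma>\<^sup>2 + \<delta>\<close>.  Hence the hypothesis yields \<open>\<G>(V) + W \<le> \<lambda> + \<delta>\<close>, and
  the known ergodic bound applies once \<open>V \<ge> 0\<close>; the latter holds because a quadratic form
  in self-adjoint operators with a positive definite coefficient matrix is a sum of
  squares, by repeatedly splitting off a Schur complement.\<close>

lemma quadratic_form_split_last: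
  fixes y :: "nat \<Rightarrow> 'a::real_algebra_1" and X :: "nat \<Rightarrow> nat \<Rightarrow> real"
  assumes sym: "\<forall>j<Suc N. \<forall>k<Suc N. X j k = X k j" and nz: "X N N \<noteq> 0"
  shows "(\<Sum>j<Suc N. \<Sum>k<Suc N. X j k *\<^sub>R (y j * y k)) =
     (\<Sum>j<N. \<Sum>k<N. (X j k - X N j * X N k / X N N) *\<^sub>R (y j * y k))
     + X N N *\<^sub>R ((y N + (\<Sum>k<N. (X N k / X N N) *\<^sub>R y k)) * (y N + (\<Sum>k<N. (X N k / X N N) *\<^sub>R y k)))"
proof -
  define p where "p = X N N"
  define Y where "Y = y N"
  define a where "a = (\<Sum>k<N. (X N k / p) *\<^sub>R y k)"
  have Ya: "p *\<^sub>R (Y * a) = (\<Sum>k<N. X N k *\<^sub>R (Y * y k))"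
    using nz by (simp add: a_def p_def sum_distrib_left scaleR_sum_right)
  have aY: "p *\<^sub>R (a * Y) = (\<Sum>j<N. X j N *\<^sub>R (y j * Y))"
    using nz sym by (simp add: a_def p_def sum_distrib_right scaleR_sum_right)
  have aa: "p *\<^sub>R (a * a) = (\<Sum>j<N. \<Sum>k<N. (X N j * X N k / p) *\<^sub>R (y j * y k))"
    using nz by (simp add: a_def p_def sum_distrib_right sum_distrib_left scaleR_sum_right)
      (subst sum.swap, simp add: mult.commute)
  have square: "p *\<^sub>R ((Y + a) * (Y + a)) = p *\<^sub>R (Y * Y) + p *\<^sub>R (Y * a) + p *\<^sub>R (a * Y) + p *\<^sub>R (a * a)"
    by (simp add: algebra_simps)
  have lhs: "(\<Sum>j<Suc N. \<Sum>k<Suc N. X j k *\<^sub>R (y j * y k)) =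
     (\<Sum>j<N. \<Sum>k<N. X j k *\<^sub>R (y j * y k)) + (\<Sum>j<N. X j N *\<^sub>R (y j * Y))
     + (\<Sum>k<N. X N k *\<^sub>R (Y * y k)) + X N N *\<^sub>R (Y * Y)"
    by (simp add: Y_def sum.distrib)
  have complement: "(\<Sum>j<N. \<Sum>k<N. (X j k - X N j * X N k / X N N) *\<^sub>R (y j * y k))
     = (\<Sum>j<N. \<Sum>k<N. X j k *\<^sub>R (y j * y k)) - (\<Sum>j<N. \<Sum>k<N. (X N j * X N k / p) *\<^sub>R (y j * y k))"
    by (simp add: p_def scaleR_left_diff_distrib sum_subtractf)
  show ?thesis
    using square lhs complement Ya aY aa
    unfolding Y_def[symmetric] a_def[symmetric] p_def[symmetric]
    by (simp add: p_def algebra_simps)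
qed

lemma sym_posdef_quadratic_form_pos:
  fixes v :: "nat \<Rightarrow> real"
  assumes "sym_posdef N X" and "\<exists>j<N. v j \<noteq> 0"
  shows "(\<Sum>j<N. \<Sum>k<N. X j k *\<^sub>R (v j * v k)) > 0"
proof -
  have "(\<Sum>j<N. \<Sum>k<N. v j * X j k * v k) > 0"
    using assms unfolding sym_posdef_def by blast
  then show ?thesis by (simp only: real_scaleR_def mult_ac)
qed

lemma sym_posdef_last_diag_pos:
  assumes "sym_posdef (Suc N) X"
  shows "X N N > 0"
proof -
  have "(\<Sum>j<Suc N. \<Sum>k<Suc N. X j k *\<^sub>R
      ((\<lambda>i. if i = N then 1 else 0::real) j * (\<lambda>i. if i = N then 1 else 0) k)) > 0"
    by (rule sym_posdef_quadratic_form_pos[OF assms]) auto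
  then show ?thesis by (simp add: if_distrib cong: if_cong)
qed

lemma sym_posdef_Schur_complement:
  assumes pd: "sym_posdef (Suc N) X"
  shows "sym_posdef N (\<lambda>j k. X j k - X N j * X N k / X N N)"
  unfolding sym_posdef_def
proof (intro conjI allI impI)
  have sym: "\<forall>j<Suc N. \<forall>k<Suc N. X j k = X k j"
    using pd unfolding sym_posdef_def by blast
  have nz: "X N N \<noteq> 0"
    using sym_posdef_last_diag_pos[OF pd] by simp
  show "X j k - X N j * X N k / X N N = X k j - X N k * X N j / X N N" if "j < N" "k < N" for j k
    using sym that by (simp add: mult.commute)
  fix v :: "nat \<Rightarrow> real"
  assume "\<exists>j<N. v j \<noteq> 0"
  \<comment> \<open>extend \<open>v\<close> so that the square split off by \<open>quadratic_form_split_last\<close> vanishes\<close>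
  define v' where "v' = v(N := - (\<Sum>k<N. (X N k / X N N) * v k))"
  have "0 < (\<Sum>j<Suc N. \<Sum>k<Suc N. X j k *\<^sub>R (v' j * v' k))"
    using \<open>\<exists>j<N. v j \<noteq> 0\<close> by (intro sym_posdef_quadratic_form_pos[OF pd]) (auto simp: v'_def)
  also have "\<dots> = (\<Sum>j<N. \<Sum>k<N. (X j k - X N j * X N k / X N N) *\<^sub>R (v' j * v' k))
      + X N N *\<^sub>R ((v' N + (\<Sum>k<N. (X N k / X N N) *\<^sub>R v' k)) * (v' N + (\<Sum>k<N. (X N k / X N N) *\<^sub>R v' k)))"
    by (rule quadratic_form_split_last[OF sym nz])
  also have "v' N + (\<Sum>k<N. (X N k / X N N) *\<^sub>R v' k) = 0"
    by (simp add: v'_def)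
  finally show "0 < (\<Sum>j<N. \<Sum>k<N. v j * (X j k - X N j * X N k / X N N) * v k)"
    by (simp add: v'_def mult_ac)
qed

context op_star_algebra
begin

lemma adj_zero: "adj 0 = 0"
  using adj_scaleR[of 0 0] by simp

lemma adj_uminus: "adj (- a) = - adj a"
  using adj_scaleR[of "-1" a] by simp

lemma adj_diff: "adj (a - b) = adj a - adj b"
  using adj_add[of a "- b"] adj_uminus[of b] by simp

lemma adj_sum: "adj (sum f A) = (\<Sum>k\<in>A. adj (f k))"
  by (induction A rule: infinite_finite_induct) (auto simp: adj_zero adj_add)

lemma adj_comm_selfadj: "adj a = a \<Longrightarrow> adj b = b \<Longrightarrow> adj (comm a b) = - comm a b"
  by (simp add: comm_def adj_diff adj_mult)

lemma adj_ii_mult_skew: "adj c = - c \<Longrightarrow> adj (ii * c) = ii * c"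
  by (simp add: adj_mult adj_ii ii_central)

lemma pos_zero: "pos 0"
  using pos_adj_mult[of 0] by simp

lemma pos_sum: "(\<And>k. k \<in> A \<Longrightarrow> pos (f k)) \<Longrightarrow> pos (sum f A)"
  by (induction A rule: infinite_finite_induct) (auto simp: pos_zero pos_add)

lemma pos_selfadj_square: "adj u = u \<Longrightarrow> pos (u * u)"
  using pos_adj_mult[of u] by simp

lemma ii_anticomm_complete_square:
  "ii * (c * w + w * c) = c * c - w * w + (ii * c + w) * (ii * c + w)"
proof -
  have "(ii * c) * (ii * c) = (ii * ii) * (c * c)"
    by (metis ii_central mult.assoc)
  then have "(ii * c) * (ii * c) = - (c * c)"
    by (simp add: ii_sq)
  moreover have "w * (ii * c) = ii * (w * c)"
    by (metis ii_central mult.assoc)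
  ultimately show ?thesis
    by (simp add: algebra_simps)
qed

lemma pos_quadratic_form:
  assumes "\<forall>j<N. adj (y j) = y j" and "sym_posdef N X"
  shows "pos (\<Sum>j<N. \<Sum>k<N. X j k *\<^sub>R (y j * y k))"
  using assms
proof (induction N arbitrary: X)
  case 0
  then show ?case by (simp add: pos_zero)
next
  case (Suc N)
  have sym: "\<forall>j<Suc N. \<forall>k<Suc N. X j k = X k j"
    using Suc.prems(2) unfolding sym_posdef_def by blast
  have diag: "X N N > 0"
    by (rule sym_posdef_last_diag_pos[OF Suc.prems(2)])
  define u where "u = y N + (\<Sum>k<N. (X N k / X N N) *\<^sub>R y k)"
  have "adj u = u"
    using Suc.prems(1) by (simp add: u_def adj_add adj_sum adj_scaleR)
  moreover have "pos (\<Sum>j<N. \<Sum>k<N. (X j k - X N j * X N k / X N N) *\<^sub>R (y j * y k))"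
    using Suc.prems(1) sym_posdef_Schur_complement[OF Suc.prems(2)] by (intro Suc.IH) auto
  moreover have "(\<Sum>j<Suc N. \<Sum>k<Suc N. X j k *\<^sub>R (y j * y k)) =
      (\<Sum>j<N. \<Sum>k<N. (X j k - X N j * X N k / X N N) *\<^sub>R (y j * y k)) + X N N *\<^sub>R (u * u)"
    unfolding u_def using sym diag by (intro quadratic_form_split_last) auto
  ultimately show ?case
    using diag by (simp add: pos_add pos_scaleR pos_selfadj_square)
qed

lemma pos_calP:
  assumes "canonical adj ii n x" and "V \<in> calP n x"
  shows "pos V"
  using assms pos_quadratic_form unfolding canonical_def calP_def by blast

lemma ii_Wterm_complete_square:
  assumes "adj V = V" and "real_vec adj m z"
  defines "c \<equiv> \<lambda>k. comm V (z k)"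
  shows "ii * Wterm m w z V = - (\<Sum>k<m. comm V (z k) * comm (z k) V) - vsq m w
      + (\<Sum>k<m. (ii * c k + w k) * (ii * c k + w k))"
proof -
  have czV: "comm (z k) V = - c k" for k
    by (simp add: c_def comm_def)
  have "ii * Wterm m w z V = (\<Sum>k<m. ii * (c k * w k + w k * c k))"
    unfolding Wterm_def czV by (simp add: c_def sum_distrib_left sum.distrib sum_subtractf[symmetric]
        distrib_left)
  also have "\<dots> = (\<Sum>k<m. c k * c k - w k * w k + (ii * c k + w k) * (ii * c k + w k))"
    by (simp only: ii_anticomm_complete_square)
  finally show ?thesis
    unfolding vsq_def by (simp add: czV c_def sum.distrib sum_subtractf sum_negf)
qed

lemma pos_Wterm_remainder:
  assumes "adj V = V" and "real_vec adj m w" and "real_vec adj m z"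
  shows "pos (\<Sum>k<m. (ii * comm V (z k) + w k) * (ii * comm V (z k) + w k))"
proof (intro pos_sum pos_selfadj_square)
  fix k assume "k \<in> {..<m}"
  then show "adj (ii * comm V (z k) + w k) = ii * comm V (z k) + w k"
    using assms unfolding real_vec_def
    by (simp add: adj_add adj_ii_mult_skew adj_comm_selfadj)
qed

lemma generator_le_sector_bound:
  assumes V_sa: "adj V = V" and w_real: "real_vec adj m w" and z_real: "real_vec adj m z"
    and comm_Hun: "comm V Hun = Wterm m w z V"
    and sector: "op_le pos (vsq m w) ((1 / gamma\<^sup>2) *\<^sub>R vsq m z + of_real delta)"
    and bound: "op_le pos
        (- (ii * comm V HP) + lindblad adj nL L V
          + (\<Sum>k<m. comm V (z k) * comm (z k) V)
          + (1 / gamma\<^sup>2) *\<^sub>R vsq m z + W)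
        (of_real lam)"
  shows "op_le pos (generator adj ii nL L (HP + Hun) V + W) (of_real (lam + delta))"
proof -
  define R where "R = (\<Sum>k<m. (ii * comm V (z k) + w k) * (ii * comm V (z k) + w k))"
  have "ii * comm V (HP + Hun) = ii * comm V HP
      + (- (\<Sum>k<m. comm V (z k) * comm (z k) V) - vsq m w + R)"
    using comm_Hun ii_Wterm_complete_square[OF V_sa z_real, of w]
    unfolding comm_def R_def by (simp add: algebra_simps)
  then have slack: "of_real (lam + delta) - (generator adj ii nL L (HP + Hun) V + W)
     = (of_real lam - (- (ii * comm V HP) + lindblad adj nL L V
          + (\<Sum>k<m. comm V (z k) * comm (z k) V) + (1 / gamma\<^sup>2) *\<^sub>R vsq m z + W))
       + (((1 / gamma\<^sup>2) *\<^sub>R vsq m z + of_real delta) - vsq m w) + R"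
    unfolding generator_def by (simp add: of_real_add algebra_simps)
  have "pos R"
    unfolding R_def by (rule pos_Wterm_remainder[OF V_sa w_real z_real])
  then show ?thesis
    using bound sector unfolding op_le_def slack by (intro pos_add)
qed

end

theorem lemma2:
  fixes adj :: "'a::real_algebra_1 \<Rightarrow> 'a" and ii :: 'a and pos :: "'a \<Rightarrow> bool"
    and n :: nat and x :: "nat \<Rightarrow> 'a"
    and gamma delta lam :: real
    and S :: 'b and nL :: nat and L :: "nat \<Rightarrow> 'a" and HP Hun :: 'a
    and m :: nat and w z :: "nat \<Rightarrow> 'a"
    and W V :: 'a
    and states :: "'s set" and expect :: "'s \<Rightarrow> 'a \<Rightarrow> real" and evol :: "'a \<Rightarrow> real \<Rightarrow> 'a"
  assumes alg: "op_star_algebra adj ii pos"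
    and can: "canonical adj ii n x"
    and gamma: "gamma > 0" and delta: "delta \<ge> 0"
    and HP_sa: "adj HP = HP"
    and Hun_W1: "Hun \<in> calW1 adj pos n x gamma delta"
    and w_real: "real_vec adj m w" and z_real: "real_vec adj m z"
    and wz_comm: "\<forall>V' \<in> calP n x. comm V' Hun = Wterm m w z V'"
    and wz_sector: "op_le pos (vsq m w) ((1 / gamma\<^sup>2) *\<^sub>R vsq m z + of_real delta)"
    and known_fact: "\<forall>rho \<in> states. \<forall>V' W' lam'.
        adj V' = V' \<and> pos V' \<and> adj W' = W' \<and> pos W' \<and>
        op_le pos (generator adj ii nL L (HP + Hun) V' + W') (of_real lam') \<longrightarrow>
        Limsup at_top (\<lambda>T. ereal (time_avg expect evol rho W' T)) \<le> ereal lam'"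
    and W_sa: "adj W = W" and W_pos: "pos W"
    and V_P: "V \<in> calP n x" and lam: "lam \<ge> 0"
    and ineq: "op_le pos
        (- (ii * comm V HP) + lindblad adj nL L V
          + (\<Sum>k<m. comm V (z k) * comm (z k) V)
          + (1 / gamma\<^sup>2) *\<^sub>R vsq m z + W)
        (of_real lam)"
  shows "\<forall>rho \<in> states.
           Limsup at_top (\<lambda>T. ereal (time_avg expect evol rho W T)) \<le> ereal (lam + delta)"
proof -
  interpret op_star_algebra adj ii pos by (rule alg)
  have V_pos: "pos V"
    by (rule pos_calP[OF can V_P])
  have V_sa: "adj V = V"
    by (rule pos_selfadj[OF V_pos])
  have "op_le pos (generator adj ii nL L (HP + Hun) V + W) (of_real (lam + delta))"
    using V_sa w_real z_real wz_comm V_P wz_sector ineq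
    by (intro generator_le_sector_bound) auto
  then show ?thesis
    using known_fact V_sa V_pos W_sa W_pos by blast
qed

end
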